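(* Let $F_v$ be a non-archimedean local field with ring of integers $\mathcal{O}_{F_v}$, uniformizer $\varpi_v$ and residue field of size $q_v$. Let $e\ge0$ be an integer and let $\phi_v$ be the characteristic function of $\mathrm{Z}(F_v)\mathrm{K}_{v,e}$. Let $(m,u)\in\mathcal{O}_{F_v}\times\mathcal{O}_{F_v}^\times$, $\gamma_{m,u}=\begin{pmatrix}0&1\\-u&m\end{pmatrix}$, $f_v=\mathrm{val}_v(m^2-4u)$, and let $N_v$ be the number of $t\in\mathcal{O}_{F_v}/\varpi_v\mathcal{O}_{F_v}$ with $t^2-mt+u=0$. Then \[ \left|\int_{F_v^\times}\int_{F_v}\phi_v\!\left(\begin{pmatrix}1&x\\0&y\end{pmatrix}^{-1}\gamma_{m,u}\begin{pmatrix}1&x\\0&y\end{pmatrix}\right)\frac{d_vx\,d_vy}{|y|_v^2}\right|\le\begin{cases}\dfrac{q_v-1+N_v}{q_v} & \text{if } e=f_v=0,\\[2mm] 4\,q_v^{-e+\frac{f_v}{2}} & \text{otherwise.}\end{cases} \]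
   Context: $\mathrm{Z}(F_v)$ is the center (scalar matrices) of $\mathrm{GL}_2(F_v)$; $\mathrm{K}_{v,e}=\{\begin{pmatrix}a&b\\c&d\end{pmatrix}\in\mathrm{GL}_2(\mathcal{O}_{F_v}): \varpi_v^e\mid c\}$; $d_vx$ is the additive Haar measure on $F_v$ with $\mathrm{Vol}(\mathcal{O}_{F_v})=1$ and $|\cdot|_v$ the normalized absolute value. (In the paper the left side is the orbital integral $\int_{\overline{\mathrm{G}_{\gamma_{m,u}}(F_v)}\backslash\overline{\mathrm{G}}(F_v)}\phi_v(g^{-1}\gamma_{m,u}g)\,dg$, with the quotient measure defined to be $d_vx\,d_vy/|y|_v^2$ on representatives $\begin{pmatrix}1&x\\0&y\end{pmatrix}$ and zero on the other representatives.) *)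

theory Defs
  imports "HOL-Analysis.Analysis"
begin

text \<open>A non-archimedean local field is modelled as a field type 'a together with a
normalized discrete valuation v (v is only meaningful on nonzero elements; the
value at 0 plays no role and stands for +infinity), complete, with finite residue field.\<close>

definition val_axioms :: "('a::field \<Rightarrow> int) \<Rightarrow> bool" where
  "val_axioms v \<longleftrightarrow>
     (\<forall>x y. x \<noteq> 0 \<longrightarrow> y \<noteq> 0 \<longrightarrow> v (x * y) = v x + v y) \<and>
     (\<forall>x y. x \<noteq> 0 \<longrightarrow> y \<noteq> 0 \<longrightarrow> x + y \<noteq> 0 \<longrightarrow> min (v x) (v y) \<le> v (x + y)) \<and>
     (\<forall>n. \<exists>x. x \<noteq> 0 \<and> v x = n)"

definition vball :: "('a::field \<Rightarrow> int) \<Rightarrow> 'a \<Rightarrow> int \<Rightarrow> 'a set" where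
  "vball v a n = {x. x = a \<or> n \<le> v (x - a)}"

definition vint :: "('a::field \<Rightarrow> int) \<Rightarrow> 'a set" where
  "vint v = vball v 0 0"

definition vmax :: "('a::field \<Rightarrow> int) \<Rightarrow> 'a set" where
  "vmax v = vball v 0 1"

definition residue :: "('a::field \<Rightarrow> int) \<Rightarrow> 'a \<Rightarrow> 'a set" where
  "residue v t = {s \<in> vint v. s - t \<in> vmax v}"

definition resq :: "('a::field \<Rightarrow> int) \<Rightarrow> nat" where
  "resq v = card (residue v ` vint v)"

definition vcomplete :: "('a::field \<Rightarrow> int) \<Rightarrow> bool" where
  "vcomplete v \<longleftrightarrow>
     (\<forall>s :: nat \<Rightarrow> 'a.
        (\<forall>n. \<exists>K. \<forall>i\<ge>K. \<forall>j\<ge>K. s i \<in> vball v (s j) n) \<longrightarrow>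
        (\<exists>l. \<forall>n. \<exists>K. \<forall>i\<ge>K. s i \<in> vball v l n))"

definition nonarch_local_field :: "('a::field \<Rightarrow> int) \<Rightarrow> bool" where
  "nonarch_local_field v \<longleftrightarrow>
     val_axioms v \<and> vcomplete v \<and> finite (residue v ` vint v)"

definition haar_measure :: "('a::field \<Rightarrow> int) \<Rightarrow> 'a measure \<Rightarrow> bool" where
  "haar_measure v M \<longleftrightarrow>
     space M = UNIV \<and>
     sets M = sigma_sets UNIV (range (\<lambda>(a, n). vball v a n)) \<and>
     (\<forall>A\<in>sets M. \<forall>a. emeasure M ((\<lambda>x. a + x) ` A) = emeasure M A) \<and>
     emeasure M (vint v) = 1"

definition absv :: "('a::field \<Rightarrow> int) \<Rightarrow> 'a \<Rightarrow> real" where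
  "absv v x = (if x = 0 then 0 else real (resq v) powr (- real_of_int (v x)))"

text \<open>2x2 matrices (a,b,c,d) = [[a,b],[c,d]].\<close>
type_synonym 'a mat2 = "'a \<times> 'a \<times> 'a \<times> 'a"

definition m2mul :: "'a::field mat2 \<Rightarrow> 'a mat2 \<Rightarrow> 'a mat2" where
  "m2mul A B = (case A of (a, b, c, d) \<Rightarrow> case B of (a', b', c', d') \<Rightarrow>
      (a * a' + b * c', a * b' + b * d', c * a' + d * c', c * b' + d * d'))"

definition m2det :: "'a::field mat2 \<Rightarrow> 'a" where
  "m2det A = (case A of (a, b, c, d) \<Rightarrow> a * d - b * c)"

definition m2inv :: "'a::field mat2 \<Rightarrow> 'a mat2" where
  "m2inv A = (case A of (a, b, c, d) \<Rightarrow>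
      (d / m2det A, - b / m2det A, - c / m2det A, a / m2det A))"

definition m2scale :: "'a::field \<Rightarrow> 'a mat2 \<Rightarrow> 'a mat2" where
  "m2scale z A = (case A of (a, b, c, d) \<Rightarrow> (z * a, z * b, z * c, z * d))"

definition Kve :: "('a::field \<Rightarrow> int) \<Rightarrow> nat \<Rightarrow> 'a mat2 set" where
  "Kve v e = {(a, b, c, d). a \<in> vint v \<and> b \<in> vint v \<and> c \<in> vint v \<and> d \<in> vint v \<and>
       c \<in> vball v 0 (int e) \<and> m2det (a, b, c, d) \<noteq> 0 \<and> v (m2det (a, b, c, d)) = 0}"

definition ZK :: "('a::field \<Rightarrow> int) \<Rightarrow> nat \<Rightarrow> 'a mat2 set" where
  "ZK v e = {g. \<exists>z k. z \<noteq> 0 \<and> k \<in> Kve v e \<and> g = m2scale z k}"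

definition gam :: "'a::field \<Rightarrow> 'a \<Rightarrow> 'a mat2" where
  "gam m u = (0, 1, - u, m)"

definition gxy :: "'a::field \<Rightarrow> 'a \<Rightarrow> 'a mat2" where
  "gxy x y = (1, x, 0, y)"

end

theory Submission
  imports Defs
begin

(*
Write g = (1 x; 0 y) and t = x / y. The conjugate g^-1 \<gamma> g has entries u t, y P(t), -u/y and
m - u t, where P(t) = u t^2 - m t + 1, and its determinant u is a unit; so it lies in Z K_{v,e} only
if t is integral, v(y) \<le> -e and v(P(t)) \<ge> -v(y).

From P(s) - P(t) = (s - t)(u(s + t) - m) and (2ut - m)^2 = D + 4u P(t), among any three solutions
of v(P(t)) \<ge> k two differ by an element of valuation at least k - \<lfloor>f/2\<rfloor>. Hence the solutions lie
in two balls, and for fixed y the x-integral is at most 2 q^(f/2). The shell v(y) = -n has weight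
|y|^-2 vol = (1 - 1/q) q^-n, and summing over n \<ge> e gives 2 q^(f/2 - e).

If e = f = 0, a solution modulo \<varpi> determines the solution modulo \<varpi>^k (Hensel), and t \<mapsto> 1/t sends
the residue classes of solutions to roots of t^2 - m t + u modulo \<varpi>. So the x-integral is at most 1
on the shell n = 0 and at most N on the others, which sums to (1 - 1/q) + N/q.
*)

lemma gxy_conj_gam:
  assumes "y \<noteq> 0"
  shows "m2mul (m2inv (gxy x y)) (m2mul (gam m u) (gxy x y)) =
    (u * (x / y), y * (u * (x / y)\<^sup>2 - m * (x / y) + 1), - u / y, m - u * (x / y))"
  using assms by (simp add: m2mul_def m2inv_def m2det_def gam_def gxy_def field_simps power2_eq_square)

locale discrete_valuation =
  fixes v :: "'a::field \<Rightarrow> int"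
  assumes val_axioms: "val_axioms v"
begin

lemma val_mult: "x \<noteq> 0 \<Longrightarrow> y \<noteq> 0 \<Longrightarrow> v (x * y) = v x + v y"
  using val_axioms unfolding val_axioms_def by blast

lemma val_add: "x \<noteq> 0 \<Longrightarrow> y \<noteq> 0 \<Longrightarrow> x + y \<noteq> 0 \<Longrightarrow> min (v x) (v y) \<le> v (x + y)"
  using val_axioms unfolding val_axioms_def by blast

lemma val_surj: "\<exists>x. x \<noteq> 0 \<and> v x = n"
  using val_axioms unfolding val_axioms_def by blast

lemma val_one [simp]: "v 1 = 0"
  using val_mult[of 1 1] by simp

lemma val_uminus [simp]: "v (- x) = v x"
proof -
  have "v (- 1) = 0"
    using val_mult[of "- 1" "- 1"] by simp
  then show ?thesis
    using val_mult[of "- 1" x] by (cases "x = 0") simp_all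
qed

lemma val_inverse: "x \<noteq> 0 \<Longrightarrow> v (inverse x) = - v x"
  using val_mult[of x "inverse x"] by simp

(* val_ge x n means x \<in> \<varpi>^n O; the junk value v 0 is never consulted. *)
definition val_ge :: "'a \<Rightarrow> int \<Rightarrow> bool" where
  "val_ge x n \<longleftrightarrow> x = 0 \<or> n \<le> v x"

lemma val_ge_zero [simp]: "val_ge 0 n"
  by (simp add: val_ge_def)

lemma val_ge_one [simp]: "val_ge 1 0"
  by (simp add: val_ge_def)

lemma not_val_ge_one: "\<not> val_ge 1 1"
  by (simp add: val_ge_def)

lemma val_ge_unit: "u \<noteq> 0 \<Longrightarrow> v u = 0 \<Longrightarrow> val_ge u 0"
  by (simp add: val_ge_def)

lemma val_ge_uminus [simp]: "val_ge (- x) n \<longleftrightarrow> val_ge x n"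
  by (simp add: val_ge_def)

lemma val_ge_mono: "val_ge x n \<Longrightarrow> m \<le> n \<Longrightarrow> val_ge x m"
  by (auto simp: val_ge_def)

lemma val_ge_add: "val_ge x n \<Longrightarrow> val_ge y n \<Longrightarrow> val_ge (x + y) n"
  unfolding val_ge_def
  by (cases "x = 0"; cases "y = 0"; cases "x + y = 0"; use val_add[of x y] in auto)

lemma val_ge_diff: "val_ge x n \<Longrightarrow> val_ge y n \<Longrightarrow> val_ge (x - y) n"
  using val_ge_add[of x n "- y"] by simp

lemma val_ge_diff_commute: "val_ge (x - y) n \<longleftrightarrow> val_ge (y - x) n"
  using val_ge_uminus[of "x - y" n] by simp

lemma val_ge_mult: "val_ge x n \<Longrightarrow> val_ge y k \<Longrightarrow> val_ge (x * y) (n + k)"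
  unfolding val_ge_def by (cases "x = 0"; cases "y = 0"; use val_mult[of x y] in auto)

lemma val_ge_mult_iff: "x \<noteq> 0 \<Longrightarrow> val_ge (x * y) n \<longleftrightarrow> val_ge y (n - v x)"
  unfolding val_ge_def by (cases "y = 0"; use val_mult[of x y] in auto)

lemma val_ge_unit_mult_iff: "u \<noteq> 0 \<Longrightarrow> v u = 0 \<Longrightarrow> val_ge (u * y) n \<longleftrightarrow> val_ge y n"
  using val_ge_mult_iff[of u y n] by simp

lemma val_ge_of_nat: "val_ge (of_nat k) 0"
  by (induction k) (simp_all add: val_ge_add)

lemma val_add_dominated:
  assumes "x \<noteq> 0" "val_ge y (v x + 1)"
  shows "x + y \<noteq> 0" "v (x + y) = v x"
proof -
  show sum_nz: "x + y \<noteq> 0"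
  proof
    assume "x + y = 0"
    then have "y = - x"
      by (simp add: add_eq_0_iff)
    then show False
      using assms by (simp add: val_ge_def)
  qed
  show "v (x + y) = v x"
  proof (cases "y = 0")
    case False
    have y: "v x + 1 \<le> v y"
      using assms False by (simp add: val_ge_def)
    have "min (v x) (v y) \<le> v (x + y)"
      using val_add[OF assms(1) False sum_nz] .
    moreover have "min (v (x + y)) (v (- y)) \<le> v (x + y + - y)"
      using val_add[OF sum_nz, of "- y"] False assms(1) by simp
    ultimately show ?thesis
      using y by simp
  qed simp
qed

lemma vball_eq: "vball v a n = {x. val_ge (x - a) n}"
  by (auto simp: vball_def val_ge_def)

lemma vint_eq: "vint v = {x. val_ge x 0}"
  by (simp add: vint_def vball_eq)

lemma vmax_eq: "vmax v = {x. val_ge x 1}"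
  by (simp add: vmax_def vball_eq)

lemma two_vballs_cover:
  assumes "\<And>s t w. s \<in> S \<Longrightarrow> t \<in> S \<Longrightarrow> w \<in> S \<Longrightarrow>
      val_ge (s - t) n \<or> val_ge (s - w) n \<or> val_ge (t - w) n"
  shows "\<exists>c1 c2. S \<subseteq> vball v c1 n \<union> vball v c2 n"
proof (cases "S = {}")
  case False
  then obtain s where s: "s \<in> S" by blast
  show ?thesis
  proof (cases "S \<subseteq> vball v s n")
    case False
    then obtain t where t: "t \<in> S" "\<not> val_ge (t - s) n"
      by (auto simp: vball_eq)
    have "S \<subseteq> vball v s n \<union> vball v t n"
    proof
      fix w assume "w \<in> S"
      then have "val_ge (s - w) n \<or> val_ge (t - w) n"
        using assms[OF s t(1)] t(2) val_ge_diff_commute by blast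
      then show "w \<in> vball v s n \<union> vball v t n"
        using val_ge_diff_commute by (auto simp: vball_eq)
    qed
    then show ?thesis by blast
  qed blast
qed auto

lemma scale_vball:
  assumes "w \<noteq> 0"
  shows "(\<lambda>x. w * x) ` vball v a n = vball v (w * a) (n + v w)"
proof -
  have diff: "w * s - w * a = w * (s - a)" for s
    by (simp add: algebra_simps)
  show ?thesis
  proof (intro set_eqI iffI)
    fix x assume "x \<in> (\<lambda>x. w * x) ` vball v a n"
    then show "x \<in> vball v (w * a) (n + v w)"
      using val_ge_mult_iff[OF assms] by (auto simp: vball_eq diff)
  next
    fix x assume "x \<in> vball v (w * a) (n + v w)"
    then have "x / w \<in> vball v a n"
      using val_ge_mult_iff[OF assms] diff[of "x / w"] assms by (simp add: vball_eq)
    moreover have "x = w * (x / w)"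
      using assms by simp
    ultimately show "x \<in> (\<lambda>x. w * x) ` vball v a n"
      by blast
  qed
qed

lemma vball_antimono: "n \<le> k \<Longrightarrow> vball v a k \<subseteq> vball v a n"
  by (auto simp: vball_eq intro: val_ge_mono)

lemma vball_translate: "vball v a n = (\<lambda>x. a + x) ` vball v 0 n"
proof (intro set_eqI iffI)
  fix x assume "x \<in> vball v a n"
  then have "x - a \<in> vball v 0 n" "x = a + (x - a)"
    by (auto simp: vball_eq)
  then show "x \<in> (\<lambda>x. a + x) ` vball v 0 n"
    by blast
qed (auto simp: vball_eq)

lemma residue_eq_vball:
  assumes "t \<in> vint v"
  shows "residue v t = vball v t 1"
proof -
  have "val_ge x 0" if "val_ge (x - t) 1" for x
    using val_ge_add[OF _ val_ge_mono[OF that], of t] assms by (simp add: vint_eq)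
  then show ?thesis
    by (auto simp: residue_def vmax_eq vball_eq vint_eq)
qed

lemma residue_self: "t \<in> vint v \<Longrightarrow> t \<in> residue v t"
  by (simp add: residue_eq_vball vball_def)

lemma residue_subset: "residue v t \<subseteq> vint v"
  by (auto simp: residue_def)

lemma residue_eq_iff:
  assumes "s \<in> vint v" "t \<in> vint v"
  shows "residue v s = residue v t \<longleftrightarrow> val_ge (s - t) 1"
proof
  assume "residue v s = residue v t"
  then have "s \<in> residue v t"
    using residue_self[OF assms(1)] by simp
  then show "val_ge (s - t) 1"
    using assms by (simp add: residue_eq_vball vball_eq)
next
  assume st: "val_ge (s - t) 1"
  have "val_ge (x - s) 1 \<longleftrightarrow> val_ge (x - t) 1" for x
    using val_ge_add[OF _ st, of "x - s"] val_ge_diff[OF _ st, of "x - t"] by auto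
  then show "residue v s = residue v t"
    using assms by (simp add: residue_eq_vball vball_eq)
qed

lemma residue_eqI:
  assumes "s \<in> vint v" "t \<in> vint v" "x \<in> residue v s" "x \<in> residue v t"
  shows "residue v s = residue v t"
proof -
  have "val_ge (x - s) 1" "val_ge (x - t) 1"
    using assms by (simp_all add: residue_eq_vball vball_eq)
  then have "val_ge ((x - t) - (x - s)) 1"
    by (rule val_ge_diff[rotated])
  then show ?thesis
    using assms(1,2) residue_eq_iff by simp
qed

lemma vint_eq_Union_residues: "vint v = (\<Union>\<rho>\<in>residue v ` vint v. \<rho>)"
  using residue_self residue_subset by blast

context
  fixes a b c :: 'a
  assumes lead_unit: "a \<noteq> 0" "v a = 0"
begin

abbreviation quad :: "'a \<Rightarrow> 'a" where
  "quad t \<equiv> a * t\<^sup>2 + b * t + c"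

abbreviation disc :: 'a where
  "disc \<equiv> b\<^sup>2 - 4 * a * c"

lemma quad_diff: "quad s - quad t = (s - t) * (a * (s + t) + b)"
  by (simp add: algebra_simps power2_eq_square)

lemma quad_completed_square: "(2 * a * t + b)\<^sup>2 = disc + 4 * a * quad t"
  by (simp add: algebra_simps power2_eq_square)

lemma quad_far_pair_shallow:
  assumes "val_ge (quad s) k" "val_ge (quad t) k" "\<not> val_ge (s - t) n"
  shows "val_ge (a * (s + t) + b) (k - n + 1)"
proof -
  have nz: "s - t \<noteq> 0" and lt: "v (s - t) \<le> n - 1"
    using assms(3) by (auto simp: val_ge_def)
  have "val_ge ((s - t) * (a * (s + t) + b)) k"
    using val_ge_diff[OF assms(1,2)] by (simp only: quad_diff)
  then have "val_ge (a * (s + t) + b) (k - v (s - t))"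
    using val_ge_mult_iff[OF nz] by blast
  then show ?thesis
    by (rule val_ge_mono) (use lt in simp)
qed

lemma quad_three_points_shallow:
  assumes "val_ge (quad s) k" "val_ge (quad t) k" "val_ge (quad w) k" and "2 * n \<le> k + 1"
  shows "val_ge (s - t) n \<or> val_ge (s - w) n \<or> val_ge (t - w) n"
proof (rule ccontr)
  assume "\<not> ?thesis"
  then have far: "\<not> val_ge (s - t) n" "\<not> val_ge (s - w) n" "\<not> val_ge (t - w) n"
    by auto
  have "val_ge ((a * (s + t) + b) - (a * (s + w) + b)) (k - n + 1)"
    using quad_far_pair_shallow[OF assms(1,2) far(1)] quad_far_pair_shallow[OF assms(1,3) far(2)]
    by (rule val_ge_diff)
  moreover have "(a * (s + t) + b) - (a * (s + w) + b) = a * (t - w)"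
    by (simp add: algebra_simps)
  ultimately have "val_ge (t - w) (k - n + 1)"
    using val_ge_unit_mult_iff[OF lead_unit] by simp
  then have "val_ge (t - w) n"
    by (rule val_ge_mono) (use assms(4) in simp)
  with far(3) show False ..
qed

lemma quad_deep_root_val:
  assumes "disc \<noteq> 0" "v disc < k" "val_ge (quad t) k"
  shows "2 * a * t + b \<noteq> 0" "2 * v (2 * a * t + b) = v disc"
proof -
  have "val_ge (4 :: 'a) 0"
    using val_ge_of_nat[of 4] by simp
  then have "val_ge (4 * a * quad t) (0 + 0 + k)"
    using val_ge_unit[OF lead_unit] assms(3) by (intro val_ge_mult)
  then have "val_ge (4 * a * quad t) (v disc + 1)"
    by (rule val_ge_mono) (use assms(2) in simp)
  note dominated = val_add_dominated[OF assms(1) this]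
  have sq: "(2 * a * t + b)\<^sup>2 \<noteq> 0" "v ((2 * a * t + b)\<^sup>2) = v disc"
    unfolding quad_completed_square using dominated by simp_all
  show nz: "2 * a * t + b \<noteq> 0"
    using sq(1) by simp
  show "2 * v (2 * a * t + b) = v disc"
    using sq(2) val_mult[OF nz nz] by (simp add: power2_eq_square)
qed

lemma quad_deep_far_pair:
  assumes "disc \<noteq> 0" "v disc < k" "val_ge (quad s) k" "val_ge (quad t) k"
    and far: "\<not> val_ge (t - s) (k - v (2 * a * s + b))"
  shows "t - s \<noteq> 0" "v (t - s) = v (2 * a * s + b)"
    "val_ge (2 * a * s + b + a * (t - s)) (k - v (2 * a * s + b))"
proof -
  define w where "w = 2 * a * s + b"
  have w_nz: "w \<noteq> 0"
    using quad_deep_root_val(1)[OF assms(1-3)] by (simp add: w_def)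
  show nz: "t - s \<noteq> 0"
    using far by auto
  have lt: "v (t - s) < k - v w"
    using far nz by (simp add: val_ge_def w_def)
  have "quad t - quad s = (t - s) * (w + a * (t - s))"
    by (simp add: w_def algebra_simps power2_eq_square)
  then have "val_ge ((t - s) * (w + a * (t - s))) k"
    using val_ge_diff[OF assms(4,3)] by simp
  then have close: "val_ge (w + a * (t - s)) (k - v (t - s))"
    using val_ge_mult_iff[OF nz] by blast
  then have "val_ge (- (w + a * (t - s))) (v w + 1)"
    unfolding val_ge_uminus by (rule val_ge_mono) (use lt in simp)
  then have "v (w + - (w + a * (t - s))) = v w"
    by (rule val_add_dominated(2)[OF w_nz])
  then have "v (a * (t - s)) = v w"
    by simp
  then show dv: "v (t - s) = v (2 * a * s + b)"
    using val_mult[OF lead_unit(1) nz] lead_unit(2) by (simp add: w_def)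
  show "val_ge (2 * a * s + b + a * (t - s)) (k - v (2 * a * s + b))"
    using close dv by (simp add: w_def)
qed

lemma quad_three_points_deep:
  assumes "disc \<noteq> 0" "v disc < k" "val_ge (quad s) k" "val_ge (quad t) k" "val_ge (quad w) k"
  shows "val_ge (s - t) (k - v disc div 2) \<or> val_ge (s - w) (k - v disc div 2) \<or>
    val_ge (t - w) (k - v disc div 2)"
proof (rule ccontr)
  define r where "r = k - v (2 * a * s + b)"
  have "2 * v (2 * a * s + b) = v disc"
    using quad_deep_root_val(2)[OF assms(1-3)] .
  then have r_eq: "k - v disc div 2 = r"
    by (simp add: r_def)
  assume "\<not> ?thesis"
  then have far: "\<not> val_ge (t - s) r" "\<not> val_ge (w - s) r" "\<not> val_ge (t - w) r"
    unfolding r_eq using val_ge_diff_commute by blast+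
  have "val_ge ((2 * a * s + b + a * (t - s)) - (2 * a * s + b + a * (w - s))) r"
    using quad_deep_far_pair(3)[OF assms(1-4)] quad_deep_far_pair(3)[OF assms(1-3,5)] far(1,2)
    by (intro val_ge_diff) (simp_all add: r_def)
  moreover have "(2 * a * s + b + a * (t - s)) - (2 * a * s + b + a * (w - s)) = a * (t - w)"
    by (simp add: algebra_simps)
  ultimately have "val_ge (t - w) r"
    using val_ge_unit_mult_iff[OF lead_unit] by simp
  with far(3) show False ..
qed

lemma quad_three_points:
  assumes "disc \<noteq> 0" "val_ge (quad s) k" "val_ge (quad t) k" "val_ge (quad w) k"
  shows "val_ge (s - t) (k - v disc div 2) \<or> val_ge (s - w) (k - v disc div 2) \<or>
    val_ge (t - w) (k - v disc div 2)"
proof (cases "v disc < k")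
  case True
  then show ?thesis
    using quad_three_points_deep assms by blast
next
  case False
  then have "2 * (k - v disc div 2) \<le> k + 1"
    by presburger
  then show ?thesis
    using quad_three_points_shallow assms(2-4) by blast
qed

lemma quad_sublevel_two_vballs:
  assumes "disc \<noteq> 0"
  shows "\<exists>c1 c2. {t. val_ge (quad t) k} \<subseteq>
    vball v c1 (k - v disc div 2) \<union> vball v c2 (k - v disc div 2)"
  using quad_three_points[OF assms] by (intro two_vballs_cover) blast

lemma quad_residue_lift_unique:
  assumes "disc \<noteq> 0" "v disc = 0" "1 \<le> k" "val_ge (quad s) k" "val_ge (quad t) k"
    and "val_ge (t - s) 1"
  shows "val_ge (t - s) k"
proof (rule ccontr)
  assume far: "\<not> val_ge (t - s) k"
  have deep: "v disc < k"
    using assms(2,3) by simp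
  have "v (2 * a * s + b) = 0"
    using quad_deep_root_val(2)[OF assms(1) deep assms(4)] assms(2) by simp
  then have "t - s \<noteq> 0" "v (t - s) = 0"
    using quad_deep_far_pair(1,2)[OF assms(1) deep assms(4,5)] far by auto
  then show False
    using assms(6) by (simp add: val_ge_def)
qed

lemma quad_sublevel_residue_vballs:
  assumes finite_residues: "finite (residue v ` vint v)"
    and "disc \<noteq> 0" "v disc = 0" "1 \<le> k"
  shows "\<exists>C. finite C \<and> card C \<le> card (residue v ` {t \<in> vint v. val_ge (quad t) 1}) \<and>
    {t \<in> vint v. val_ge (quad t) k} \<subseteq> (\<Union>c\<in>C. vball v c k)"
proof -
  define A where "A = {t \<in> vint v. val_ge (quad t) k}"
  have "\<forall>\<rho>\<in>residue v ` A. \<exists>t\<in>A. residue v t = \<rho>"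
    by blast
  then obtain rep where rep: "\<And>\<rho>. \<rho> \<in> residue v ` A \<Longrightarrow> rep \<rho> \<in> A \<and> residue v (rep \<rho>) = \<rho>"
    by metis
  have finite_A1: "finite (residue v ` {t \<in> vint v. val_ge (quad t) 1})"
    using finite_residues by (rule rev_finite_subset) auto
  have "A \<subseteq> {t \<in> vint v. val_ge (quad t) 1}"
    using assms(4) val_ge_mono by (auto simp: A_def)
  then have "card (residue v ` A) \<le> card (residue v ` {t \<in> vint v. val_ge (quad t) 1})"
    using finite_A1 by (intro card_mono image_mono)
  moreover have finite_R: "finite (residue v ` A)"
    using finite_residues by (rule rev_finite_subset) (auto simp: A_def)
  ultimately have "card (rep ` residue v ` A) \<le> card (residue v ` {t \<in> vint v. val_ge (quad t) 1})"
    using card_image_le[OF finite_R, of rep] by linarith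
  moreover have "finite (rep ` residue v ` A)"
    using finite_R by (rule finite_imageI)
  moreover have "A \<subseteq> (\<Union>c\<in>rep ` residue v ` A. vball v c k)"
  proof
    fix t assume t: "t \<in> A"
    then have c: "rep (residue v t) \<in> A" "residue v (rep (residue v t)) = residue v t"
      using rep by auto
    then have "val_ge (t - rep (residue v t)) 1"
      using residue_eq_iff[of t "rep (residue v t)"] t by (simp add: A_def)
    then have "val_ge (t - rep (residue v t)) k"
      using quad_residue_lift_unique[OF assms(2-4)] c(1) t by (simp add: A_def)
    then have "t \<in> vball v (rep (residue v t)) k"
      by (simp add: vball_eq)
    then show "t \<in> (\<Union>c\<in>rep ` residue v ` A. vball v c k)"
      using t by blast
  qed
  ultimately have "\<exists>C. finite C \<and> card C \<le> card (residue v ` {t \<in> vint v. val_ge (quad t) 1}) \<and>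
      A \<subseteq> (\<Union>c\<in>C. vball v c k)"
    by blast
  then show ?thesis
    by (simp only: A_def)
qed

end

lemma gxy_conj_gam_in_ZK:
  assumes y: "y \<noteq> 0" and u: "u \<noteq> 0" "v u = 0"
    and ZK: "m2mul (m2inv (gxy x y)) (m2mul (gam m u) (gxy x y)) \<in> ZK v e"
  shows "int e \<le> - v y" "val_ge (x / y) 0" "val_ge (u * (x / y)\<^sup>2 - m * (x / y) + 1) (- v y)"
proof -
  obtain z a b c d where z: "z \<noteq> 0" and K: "(a, b, c, d) \<in> Kve v e"
    and eq: "m2mul (m2inv (gxy x y)) (m2mul (gam m u) (gxy x y)) = m2scale z (a, b, c, d)"
    using ZK unfolding ZK_def by auto
  have K_val: "val_ge a 0" "val_ge b 0" "val_ge c (int e)" "a * d - b * c \<noteq> 0" "v (a * d - b * c) = 0"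
    using K by (auto simp: Kve_def vint_eq vball_eq m2det_def)
  have entries: "z * a = u * (x / y)" "z * b = y * (u * (x / y)\<^sup>2 - m * (x / y) + 1)"
    "z * c = - u / y" "z * d = m - u * (x / y)"
    using eq gxy_conj_gam[OF y, of x m u] by (auto simp: m2scale_def)
  \<comment> \<open>the conjugate has the unit determinant u, so the scalar z is a unit\<close>
  have "(z * z) * (a * d - b * c) = (z * a) * (z * d) - (z * b) * (z * c)"
    by (simp add: algebra_simps)
  also have "\<dots> = u"
    unfolding entries using y by (simp add: field_simps power2_eq_square)
  finally have "v (z * z) + v (a * d - b * c) = v u"
    using val_mult[of "z * z"] z K_val(4) by (metis mult_eq_0_iff)
  then have z_unit: "val_ge z 0"
    using val_mult[OF z z] K_val(5) u(2) by (simp add: val_ge_def)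
  have "val_ge (u * (x / y)) 0"
    using val_ge_mult[OF z_unit K_val(1)] entries(1) by simp
  then show "val_ge (x / y) 0"
    using val_ge_unit_mult_iff[OF u, of "x / y"] by simp
  have "val_ge (y * (u * (x / y)\<^sup>2 - m * (x / y) + 1)) 0"
    using val_ge_mult[OF z_unit K_val(2)] entries(2) by simp
  then show "val_ge (u * (x / y)\<^sup>2 - m * (x / y) + 1) (- v y)"
    using val_ge_mult_iff[OF y] by simp
  have "val_ge (- u / y) (int e)"
    using val_ge_mult[OF z_unit K_val(3)] entries(3) by simp
  moreover have "- u / y \<noteq> 0" "v (- u / y) = - v y"
    using u y val_mult[of u "inverse y"] val_inverse[OF y] by (auto simp: divide_inverse)
  ultimately show "int e \<le> - v y"
    by (simp add: val_ge_def)
qed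

(* u t^2 - m t + 1 = t^2 \<chi>(1/t) for the characteristic polynomial \<chi>(X) = X^2 - m X + u of \<gamma>. *)
lemma reversed_root_inverse:
  assumes m: "m \<in> vint v" and u: "u \<noteq> 0" "v u = 0"
    and t: "t \<in> vint v" "val_ge (u * t\<^sup>2 - m * t + 1) 1"
  shows "t \<noteq> 0" "v t = 0" "inverse t \<in> vint v"
    "(inverse t)\<^sup>2 - m * inverse t + u \<in> vmax v"
proof -
  show t_nz: "t \<noteq> 0"
    using t(2) not_val_ge_one by auto
  show t_unit: "v t = 0"
  proof (rule ccontr)
    assume "v t \<noteq> 0"
    then have t1: "val_ge t 1"
      using t(1) t_nz by (simp add: vint_eq val_ge_def)
    have "val_ge (u * t * t) (0 + 1 + 0)"
      using t(1) val_ge_unit[OF u] by (intro val_ge_mult t1) (simp_all add: vint_eq)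
    moreover have "val_ge (m * t) (0 + 1)"
      using m by (intro val_ge_mult t1) (simp add: vint_eq)
    ultimately have "val_ge (u * t\<^sup>2 - m * t) 1"
      by (intro val_ge_diff) (simp_all add: power2_eq_square mult.assoc)
    then have "val_ge ((u * t\<^sup>2 - m * t + 1) - (u * t\<^sup>2 - m * t)) 1"
      by (rule val_ge_diff[OF t(2)])
    then show False
      using not_val_ge_one by simp
  qed
  show "inverse t \<in> vint v"
    using t_nz t_unit val_inverse[OF t_nz] by (simp add: vint_eq val_ge_def)
  have "val_ge ((inverse t)\<^sup>2 * (u * t\<^sup>2 - m * t + 1)) (0 + 1)"
    using t_nz t_unit val_inverse[OF t_nz] val_mult
    by (intro val_ge_mult[OF _ t(2)]) (simp add: val_ge_def power2_eq_square)
  moreover have "(inverse t)\<^sup>2 * (u * t\<^sup>2 - m * t + 1) = (inverse t)\<^sup>2 - m * inverse t + u"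
    using t_nz by (simp add: field_simps power2_eq_square)
  ultimately show "(inverse t)\<^sup>2 - m * inverse t + u \<in> vmax v"
    by (simp add: vmax_eq)
qed


lemma card_residues_reversed_roots_le:
  assumes finite_residues: "finite (residue v ` vint v)" and m: "m \<in> vint v" and u: "u \<noteq> 0" "v u = 0"
  shows "card (residue v ` {t \<in> vint v. val_ge (u * t\<^sup>2 - m * t + 1) 1}) \<le>
    card (residue v ` {t \<in> vint v. t\<^sup>2 - m * t + u \<in> vmax v})"
proof -
  define A where "A = {t \<in> vint v. val_ge (u * t\<^sup>2 - m * t + 1) 1}"
  define B where "B = {t \<in> vint v. t\<^sup>2 - m * t + u \<in> vmax v}"
  define rel where "rel \<rho> \<sigma> \<longleftrightarrow> (\<exists>t\<in>A. \<rho> = residue v t \<and> \<sigma> = residue v (inverse t))" for \<rho> \<sigma>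
  have "card (residue v ` A) \<le> card (residue v ` B)"
  proof (rule card_le_if_inj_on_rel[where r = rel])
    show "finite (residue v ` B)"
      using finite_residues by (rule rev_finite_subset) (auto simp: B_def)
  next
    fix \<rho> assume "\<rho> \<in> residue v ` A"
    then obtain t where t: "t \<in> A" "\<rho> = residue v t"
      by blast
    then have "inverse t \<in> B"
      using reversed_root_inverse[OF m u] by (simp add: A_def B_def)
    moreover have "rel \<rho> (residue v (inverse t))"
      using t by (auto simp: rel_def)
    ultimately show "\<exists>\<sigma>. \<sigma> \<in> residue v ` B \<and> rel \<rho> \<sigma>"
      by blast
  next
    fix \<rho>1 \<rho>2 \<sigma> assume "rel \<rho>1 \<sigma>" "rel \<rho>2 \<sigma>"
    then obtain s t where s: "s \<in> vint v" "val_ge (u * s\<^sup>2 - m * s + 1) 1" "\<rho>1 = residue v s"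
        and t: "t \<in> vint v" "val_ge (u * t\<^sup>2 - m * t + 1) 1" "\<rho>2 = residue v t"
        and same: "residue v (inverse s) = residue v (inverse t)"
      by (auto simp: rel_def A_def)
    note s_root = reversed_root_inverse[OF m u s(1,2)] and t_root = reversed_root_inverse[OF m u t(1,2)]
    have "val_ge (inverse s - inverse t) 1"
      using same residue_eq_iff[OF s_root(3) t_root(3)] by simp
    moreover have "inverse s - inverse t = inverse s * (inverse t * (t - s))"
      using s_root(1) t_root(1) by (simp add: field_simps)
    ultimately have "val_ge (t - s) 1"
      using val_ge_unit_mult_iff s_root(1,2) t_root(1,2) val_inverse by simp
    then show "\<rho>1 = \<rho>2"
      using residue_eq_iff[OF t(1) s(1)] s(3) t(3) by simp
  qed
  then show ?thesis
    by (simp add: A_def B_def)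
qed

end

lemma geometric_tail_sums:
  fixes r C :: real
  assumes "0 \<le> r" "r < 1"
  shows "(\<lambda>n. (if n < e then 0 else C) * ((1 - r) * r ^ n)) sums (C * r ^ e)"
proof -
  have "(\<lambda>i. r ^ i) sums (1 / (1 - r))"
    using assms by (intro geometric_sums) simp
  then have "(\<lambda>i. C * (1 - r) * r ^ e * r ^ i) sums (C * (1 - r) * r ^ e * (1 / (1 - r)))"
    by (rule sums_mult)
  then have "(\<lambda>i. (\<lambda>n. (if n < e then 0 else C) * ((1 - r) * r ^ n)) (i + e)) sums (C * r ^ e)"
    using assms by (simp add: power_add mult_ac)
  then show ?thesis
    using sums_iff_shift[of "\<lambda>n. (if n < e then 0 else C) * ((1 - r) * r ^ n)" e] by simp
qed

lemma geometric_sums_first_term: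
  fixes r N :: real
  assumes "0 \<le> r" "r < 1"
  shows "(\<lambda>n. (if n = 0 then 1 else N) * ((1 - r) * r ^ n)) sums (1 - r + N * r)"
proof -
  have "(\<lambda>n. (if n = 0 then 1 else N) * ((1 - r) * r ^ n)) =
      (\<lambda>n. (if n < 1 then 0 else N) * ((1 - r) * r ^ n) + (if n = 0 then 1 - r else 0))"
    by (rule ext) simp
  also have "\<dots> sums (N * r ^ 1 + (1 - r))"
    using geometric_tail_sums[OF assms, of 1 N] sums_single[of 0 "\<lambda>_. 1 - r"]
    by (intro sums_add) simp_all
  finally show ?thesis
    by (simp add: add.commute)
qed

locale local_field_haar = discrete_valuation v for v :: "'a::field \<Rightarrow> int" +
  fixes M :: "'a measure"
  assumes finite_residue_field: "finite (residue v ` vint v)"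
    and haar: "haar_measure v M"
begin

abbreviation q :: real where
  "q \<equiv> real (resq v)"

lemma sets_vball [measurable]: "vball v a n \<in> sets M"
  using haar by (auto simp: haar_measure_def intro: sigma_sets.Basic)

lemma emeasure_vball_translate: "emeasure M (vball v a n) = emeasure M (vball v 0 n)"
  using haar vball_translate[of a n] sets_vball[of 0 n] by (simp add: haar_measure_def)

lemma resq_ge_2: "2 \<le> q"
proof -
  have units: "0 \<in> vint v" "1 \<in> vint v"
    by (auto simp: vint_eq)
  then have "card {residue v 0, residue v 1} = 2"
    using residue_eq_iff[OF units] not_val_ge_one by simp
  moreover have "{residue v 0, residue v 1} \<subseteq> residue v ` vint v"
    using units by blast
  ultimately show ?thesis
    unfolding resq_def by (metis card_mono finite_residue_field of_nat_le_iff of_nat_numeral)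
qed

lemma q_pos: "0 < q"
  using resq_ge_2 by simp

lemma emeasure_vball_split: "emeasure M (vball v 0 n) = ennreal q * emeasure M (vball v 0 (n + 1))"
proof -
  obtain w where w: "w \<noteq> 0" "v w = n"
    using val_surj by blast
  define I where "I = residue v ` vint v"
  define F where "F = (\<lambda>\<rho>. (\<lambda>x. w * x) ` \<rho>)"
  have F_residue: "F (residue v t) = vball v (w * t) (n + 1)" if "t \<in> vint v" for t
    using scale_vball[OF w(1), of t 1] that w by (simp add: F_def residue_eq_vball add.commute)
  have "vball v 0 n = (\<lambda>x. w * x) ` vint v"
    using scale_vball[OF w(1), of 0 0] w by (simp add: vint_def)
  also have "\<dots> = (\<Union>\<rho>\<in>I. F \<rho>)"
    unfolding F_def I_def by (subst vint_eq_Union_residues) blast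
  finally have U: "vball v 0 n = (\<Union>\<rho>\<in>I. F \<rho>)" .
  have disj: "disjoint_family_on F I"
    unfolding disjoint_family_on_def
  proof (intro ballI impI)
    fix r1 r2 assume "r1 \<in> I" "r2 \<in> I" "r1 \<noteq> r2"
    then obtain s t where st: "s \<in> vint v" "t \<in> vint v" "r1 = residue v s" "r2 = residue v t"
      "residue v s \<noteq> residue v t"
      by (auto simp: I_def)
    show "F r1 \<inter> F r2 = {}"
    proof (rule ccontr)
      assume "F r1 \<inter> F r2 \<noteq> {}"
      then obtain x where "x \<in> residue v s" "x \<in> residue v t"
        using w(1) st(3,4) by (auto simp: F_def)
      then show False
        using residue_eqI[OF st(1,2)] st(5) by blast
    qed
  qed
  have "emeasure M (vball v 0 n) = (\<Sum>\<rho>\<in>I. emeasure M (F \<rho>))"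
    unfolding U using disj F_residue finite_residue_field
    by (intro sum_emeasure[symmetric]) (auto simp: I_def)
  also have "\<dots> = (\<Sum>\<rho>\<in>I. emeasure M (vball v 0 (n + 1)))"
    using F_residue emeasure_vball_translate by (intro sum.cong) (auto simp: I_def)
  also have "\<dots> = ennreal q * emeasure M (vball v 0 (n + 1))"
    by (simp add: I_def resq_def ennreal_of_nat_eq_real_of_nat)
  finally show ?thesis .
qed

lemma emeasure_vball: "emeasure M (vball v a n) = ennreal (q powr (- real_of_int n))"
proof -
  have q_powr_step: "q * q powr (- real_of_int (i + 1)) = q powr (- real_of_int i)" for i
    using q_pos by (simp add: powr_diff)
  have "emeasure M (vball v 0 n) = ennreal (q powr (- real_of_int n))" for n
  proof (induction n rule: int_induct[where k = 0])
    case base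
    then show ?case
      using haar q_pos by (simp add: haar_measure_def vint_def)
  next
    case (step1 i)
    have "ennreal q * emeasure M (vball v 0 (i + 1)) = ennreal (q powr (- real_of_int i))"
      using emeasure_vball_split[of i] step1(2) by simp
    also have "\<dots> = ennreal q * ennreal (q powr (- real_of_int (i + 1)))"
      using q_powr_step[of i] ennreal_mult[of q "q powr (- real_of_int (i + 1))"] q_pos by simp
    finally show ?case
      using q_pos by (simp add: ennreal_mult_cancel_left)
  next
    case (step2 i)
    have "emeasure M (vball v 0 (i - 1)) = ennreal q * ennreal (q powr (- real_of_int i))"
      using emeasure_vball_split[of "i - 1"] step2(2) by simp
    also have "\<dots> = ennreal (q powr (- real_of_int (i - 1)))"
      using q_powr_step[of "i - 1"] ennreal_mult[of q "q powr (- real_of_int i)"] q_pos by simp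
    finally show ?case .
  qed
  then show ?thesis
    using emeasure_vball_translate by simp
qed

definition inner_orbital :: "nat \<Rightarrow> 'a \<Rightarrow> 'a \<Rightarrow> 'a \<Rightarrow> ennreal" where
  "inner_orbital e m u y =
    (\<integral>\<^sup>+ x. indicator (ZK v e) (m2mul (m2inv (gxy x y)) (m2mul (gam m u) (gxy x y))) \<partial>M)"

lemma inner_orbital_le_emeasure:
  assumes "T \<in> sets M"
    and "\<And>x. m2mul (m2inv (gxy x y)) (m2mul (gam m u) (gxy x y)) \<in> ZK v e \<Longrightarrow> x \<in> T"
  shows "inner_orbital e m u y \<le> emeasure M T"
proof -
  have "inner_orbital e m u y \<le> (\<integral>\<^sup>+ x. indicator T x \<partial>M)"
    unfolding inner_orbital_def using assms(2) by (intro nn_integral_mono) (simp add: indicator_def)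
  then show ?thesis
    using assms(1) by simp
qed

lemma inner_orbital_eq_0:
  assumes "y \<noteq> 0" "u \<noteq> 0" "v u = 0" "- v y < int e"
  shows "inner_orbital e m u y = 0"
  using inner_orbital_le_emeasure[of "{}"] gxy_conj_gam_in_ZK(1)[OF assms(1-3)] assms(4)
  by force

lemma inner_orbital_le_two_vballs:
  assumes y: "y \<noteq> 0" and u: "u \<noteq> 0" "v u = 0" and D: "m\<^sup>2 - 4 * u \<noteq> 0"
  shows "inner_orbital e m u y \<le> ennreal (2 * q powr (real_of_int (v (m\<^sup>2 - 4 * u)) / 2))"
proof -
  define k where "k = - v y"
  define r where "r = k - v (m\<^sup>2 - 4 * u) div 2"
  obtain c1 c2 where cover: "{t. val_ge (u * t\<^sup>2 - m * t + 1) k} \<subseteq> vball v c1 r \<union> vball v c2 r"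
    using quad_sublevel_two_vballs[OF u, of "- m" 1 k] D by (auto simp: r_def)
  define T where "T = vball v (y * c1) (r + v y) \<union> vball v (y * c2) (r + v y)"
  have "inner_orbital e m u y \<le> emeasure M T"
  proof (rule inner_orbital_le_emeasure)
    show "T \<in> sets M"
      unfolding T_def by measurable
    fix x assume "m2mul (m2inv (gxy x y)) (m2mul (gam m u) (gxy x y)) \<in> ZK v e"
    then have "val_ge (u * (x / y)\<^sup>2 - m * (x / y) + 1) k"
      unfolding k_def by (rule gxy_conj_gam_in_ZK(3)[OF y u])
    then have "x / y \<in> vball v c1 r \<union> vball v c2 r"
      using cover by blast
    then have "y * (x / y) \<in> (\<lambda>x. y * x) ` (vball v c1 r \<union> vball v c2 r)"
      by blast
    then show "x \<in> T"
      unfolding T_def image_Un scale_vball[OF y] using y by simp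
  qed
  also have "\<dots> \<le> emeasure M (vball v (y * c1) (r + v y)) + emeasure M (vball v (y * c2) (r + v y))"
    unfolding T_def by (rule emeasure_subadditive) measurable
  also have "\<dots> = ennreal (2 * q powr real_of_int (v (m\<^sup>2 - 4 * u) div 2))"
    by (simp add: emeasure_vball r_def k_def ennreal_plus[symmetric] del: ennreal_plus)
  also have "\<dots> \<le> ennreal (2 * q powr (real_of_int (v (m\<^sup>2 - 4 * u)) / 2))"
    using resq_ge_2 by (intro ennreal_leI mult_left_mono powr_mono) linarith+
  finally show ?thesis .
qed

lemma inner_orbital_le_1:
  assumes y: "y \<noteq> 0" "v y = 0" and u: "u \<noteq> 0" "v u = 0"
  shows "inner_orbital e m u y \<le> 1"
proof -
  have "inner_orbital e m u y \<le> emeasure M (vint v)"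
  proof (rule inner_orbital_le_emeasure)
    fix x assume "m2mul (m2inv (gxy x y)) (m2mul (gam m u) (gxy x y)) \<in> ZK v e"
    then have "val_ge (x / y) 0"
      by (rule gxy_conj_gam_in_ZK(2)[OF y(1) u])
    then show "x \<in> vint v"
      using val_ge_mult_iff[OF y(1), of "x / y" 0] y by (simp add: vint_eq)
  qed (simp add: vint_def)
  then show ?thesis
    using haar by (simp add: haar_measure_def)
qed

lemma inner_orbital_le_card_roots:
  assumes y: "y \<noteq> 0" "1 \<le> - v y" and u: "u \<noteq> 0" "v u = 0" and m: "m \<in> vint v"
    and D: "m\<^sup>2 - 4 * u \<noteq> 0" "v (m\<^sup>2 - 4 * u) = 0"
  shows "inner_orbital e m u y \<le> of_nat (card (residue v ` {t \<in> vint v. t\<^sup>2 - m * t + u \<in> vmax v}))"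
proof -
  define k where "k = - v y"
  have "\<exists>C. finite C \<and> card C \<le> card (residue v ` {t \<in> vint v. val_ge (u * t\<^sup>2 - m * t + 1) 1}) \<and>
      {t \<in> vint v. val_ge (u * t\<^sup>2 - m * t + 1) k} \<subseteq> (\<Union>c\<in>C. vball v c k)"
    using quad_sublevel_residue_vballs[OF u finite_residue_field, of "- m" 1 k] D y(2) by (simp add: k_def)
  then obtain C where C: "finite C"
      "card C \<le> card (residue v ` {t \<in> vint v. val_ge (u * t\<^sup>2 - m * t + 1) 1})"
      "{t \<in> vint v. val_ge (u * t\<^sup>2 - m * t + 1) k} \<subseteq> (\<Union>c\<in>C. vball v c k)"
    by blast
  have "inner_orbital e m u y \<le> emeasure M (\<Union>c\<in>C. vball v (y * c) 0)"
  proof (rule inner_orbital_le_emeasure)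
    show "(\<Union>c\<in>C. vball v (y * c) 0) \<in> sets M"
      using C(1) by (intro sets.finite_UN) auto
    fix x assume "m2mul (m2inv (gxy x y)) (m2mul (gam m u) (gxy x y)) \<in> ZK v e"
    then have "x / y \<in> {t \<in> vint v. val_ge (u * t\<^sup>2 - m * t + 1) k}"
      using gxy_conj_gam_in_ZK(2,3)[OF y(1) u] by (simp add: k_def vint_eq)
    then obtain c where c: "c \<in> C" "x / y \<in> vball v c k"
      using C(3) by blast
    then have "y * (x / y) \<in> (\<lambda>x. y * x) ` vball v c k"
      by blast
    then have "x \<in> vball v (y * c) 0"
      using scale_vball[OF y(1), of c k] y(1) by (simp add: k_def)
    then show "x \<in> (\<Union>c\<in>C. vball v (y * c) 0)"
      using c(1) by blast
  qed
  also have "\<dots> \<le> (\<Sum>c\<in>C. emeasure M (vball v (y * c) 0))"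
    using C(1) by (intro emeasure_subadditive_finite) auto
  also have "\<dots> = of_nat (card C)"
    using q_pos by (simp add: emeasure_vball)
  also have "card C \<le> card (residue v ` {t \<in> vint v. t\<^sup>2 - m * t + u \<in> vmax v})"
    using C(2) card_residues_reversed_roots_le[OF finite_residue_field m u] by linarith
  finally show ?thesis
    by simp
qed

definition shell :: "nat \<Rightarrow> 'a set" where
  "shell n = {y. y \<noteq> 0 \<and> v y = - int n}"

lemma shell_eq_vball_diff: "shell n = vball v 0 (- int n) - vball v 0 (- int n + 1)"
  by (auto simp: shell_def vball_eq val_ge_def)

lemma sets_shell [measurable]: "shell n \<in> sets M"
  unfolding shell_eq_vball_diff by measurable

lemma emeasure_shell: "emeasure M (shell n) = ennreal ((1 - 1 / q) * q ^ n)"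
proof -
  have "emeasure M (shell n) =
      emeasure M (vball v 0 (- int n)) - emeasure M (vball v 0 (- int n + 1))"
    unfolding shell_eq_vball_diff using vball_antimono[of "- int n" "- int n + 1" 0]
    by (intro emeasure_Diff) (simp_all add: emeasure_vball)
  also have "\<dots> = ennreal (q ^ n) - ennreal (q ^ n / q)"
    using q_pos by (simp add: emeasure_vball powr_realpow powr_diff)
  also have "\<dots> = ennreal ((1 - 1 / q) * q ^ n)"
    using q_pos by (simp add: ennreal_minus algebra_simps)
  finally show ?thesis .
qed

lemma absv_shell:
  assumes "y \<in> shell n"
  shows "1 / (absv v y)\<^sup>2 = (1 / q) ^ (2 * n)"
proof -
  have "absv v y = q ^ n"
    using assms q_pos by (simp add: shell_def absv_def powr_realpow)
  then show ?thesis
    by (simp add: power_one_over power_mult_distrib[symmetric] power_mult mult.commute)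
qed

lemma emeasure_shell_weighted:
  assumes "0 \<le> g"
  shows "ennreal ((1 / q) ^ (2 * n) * g) * emeasure M (shell n) = ennreal (g * ((1 - 1 / q) * (1 / q) ^ n))"
proof -
  have pow: "(1 / q) ^ (2 * n) * q ^ n = (1 / q) ^ n"
    using q_pos by (simp add: power_mult power2_eq_square power_mult_distrib[symmetric])
  have "(1 / q) ^ (2 * n) * g * ((1 - 1 / q) * q ^ n) = g * (1 - 1 / q) * ((1 / q) ^ (2 * n) * q ^ n)"
    by (simp only: mult_ac)
  also have "\<dots> = g * ((1 - 1 / q) * (1 / q) ^ n)"
    unfolding pow by (simp only: mult.assoc)
  finally have real_eq: "(1 / q) ^ (2 * n) * g * ((1 - 1 / q) * q ^ n) = g * ((1 - 1 / q) * (1 / q) ^ n)" .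
  have "ennreal ((1 / q) ^ (2 * n) * g) * emeasure M (shell n) =
      ennreal ((1 / q) ^ (2 * n) * g * ((1 - 1 / q) * q ^ n))"
    unfolding emeasure_shell using assms resq_ge_2 by (intro ennreal_mult[symmetric]) simp_all
  then show ?thesis
    by (simp only: real_eq)
qed

lemma nn_integral_shell_bound:
  fixes F :: "'a \<Rightarrow> ennreal" and g :: "nat \<Rightarrow> real"
  assumes F_zero: "\<And>y. y \<noteq> 0 \<Longrightarrow> 0 < v y \<Longrightarrow> F y = 0"
    and F_le: "\<And>n y. y \<in> shell n \<Longrightarrow> F y \<le> ennreal (g n)"
    and g_nonneg: "\<And>n. 0 \<le> g n"
  shows "(\<integral>\<^sup>+ y. (if y = 0 then 0 else ennreal (1 / (absv v y)\<^sup>2) * F y) \<partial>M)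
    \<le> (\<Sum>n. ennreal (g n * ((1 - 1 / q) * (1 / q) ^ n)))"
proof -
  define c where "c n = ennreal ((1 / q) ^ (2 * n) * g n)" for n
  have "(\<integral>\<^sup>+ y. (if y = 0 then 0 else ennreal (1 / (absv v y)\<^sup>2) * F y) \<partial>M)
      \<le> (\<integral>\<^sup>+ y. (\<Sum>n. c n * indicator (shell n) y) \<partial>M)"
  proof (rule nn_integral_mono)
    fix y
    show "(if y = 0 then 0 else ennreal (1 / (absv v y)\<^sup>2) * F y) \<le> (\<Sum>n. c n * indicator (shell n) y)"
    proof (cases "y \<noteq> 0 \<and> v y \<le> 0")
      case True
      define n where "n = nat (- v y)"
      have y: "y \<in> shell n"
        using True by (simp add: shell_def n_def)
      have "(if y = 0 then 0 else ennreal (1 / (absv v y)\<^sup>2) * F y) \<le> c n * indicator (shell n) y"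
        using y absv_shell[OF y] mult_left_mono[OF F_le[OF y], of "ennreal ((1 / q) ^ (2 * n))"]
          g_nonneg q_pos
        by (simp add: c_def shell_def ennreal_mult)
      also have "\<dots> \<le> (\<Sum>n. c n * indicator (shell n) y)"
      proof -
        define h :: "nat \<Rightarrow> ennreal" where "h = (\<lambda>m. c m * indicator (shell m) y)"
        have "h n \<le> suminf h"
          using sum_le_suminf[OF summableI, of "{n}" h] by simp
        then show ?thesis
          unfolding h_def by simp
      qed
      finally show ?thesis .
    qed (use F_zero in auto)
  qed
  also have "\<dots> = (\<Sum>n. (\<integral>\<^sup>+ y. c n * indicator (shell n) y \<partial>M))"
    by (rule nn_integral_suminf) measurable
  also have "\<dots> = (\<Sum>n. ennreal (g n * ((1 - 1 / q) * (1 / q) ^ n)))"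
    using g_nonneg by (simp add: c_def nn_integral_cmult_indicator emeasure_shell_weighted)
  finally show ?thesis .
qed

definition orbital_integral :: "nat \<Rightarrow> 'a \<Rightarrow> 'a \<Rightarrow> ennreal" where
  "orbital_integral e m u =
    (\<integral>\<^sup>+ y. (if y = 0 then 0 else ennreal (1 / (absv v y)\<^sup>2) * inner_orbital e m u y) \<partial>M)"

lemma orbital_integral_le:
  assumes u: "u \<noteq> 0" "v u = 0" and D: "m\<^sup>2 - 4 * u \<noteq> 0"
  shows "orbital_integral e m u \<le> ennreal (2 * q powr (real_of_int (v (m\<^sup>2 - 4 * u)) / 2 - real e))"
proof -
  define C where "C = 2 * q powr (real_of_int (v (m\<^sup>2 - 4 * u)) / 2)"
  have "orbital_integral e m u \<le> (\<Sum>n. ennreal ((if n < e then 0 else C) * ((1 - 1 / q) * (1 / q) ^ n)))"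
    unfolding orbital_integral_def
  proof (rule nn_integral_shell_bound)
    fix y assume "y \<noteq> 0" "0 < v y"
    then show "inner_orbital e m u y = 0"
      using inner_orbital_eq_0[OF _ u] by simp
  next
    fix n y assume y: "y \<in> shell n"
    then show "inner_orbital e m u y \<le> ennreal (if n < e then 0 else C)"
      using inner_orbital_eq_0[OF _ u] inner_orbital_le_two_vballs[OF _ u D]
      by (auto simp: shell_def C_def)
  qed (simp add: C_def)
  also have "\<dots> = ennreal (C * (1 / q) ^ e)"
    using geometric_tail_sums[of "1 / q" e C] resq_ge_2 by (intro suminf_ennreal_eq) (simp_all add: C_def)
  also have "C * (1 / q) ^ e = 2 * q powr (real_of_int (v (m\<^sup>2 - 4 * u)) / 2 - real e)"
    using q_pos by (simp add: C_def powr_diff powr_realpow power_one_over)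
  finally show ?thesis .
qed

lemma orbital_integral_le_unramified:
  assumes u: "u \<noteq> 0" "v u = 0" and m: "m \<in> vint v"
    and D: "m\<^sup>2 - 4 * u \<noteq> 0" "v (m\<^sup>2 - 4 * u) = 0"
  shows "orbital_integral 0 m u \<le>
    ennreal ((q - 1 + real (card (residue v ` {t \<in> vint v. t\<^sup>2 - m * t + u \<in> vmax v}))) / q)"
proof -
  define N where "N = real (card (residue v ` {t \<in> vint v. t\<^sup>2 - m * t + u \<in> vmax v}))"
  have "orbital_integral 0 m u \<le> (\<Sum>n. ennreal ((if n = 0 then 1 else N) * ((1 - 1 / q) * (1 / q) ^ n)))"
    unfolding orbital_integral_def
  proof (rule nn_integral_shell_bound)
    fix y assume "y \<noteq> 0" "0 < v y"
    then show "inner_orbital 0 m u y = 0"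
      using inner_orbital_eq_0[OF _ u] by simp
  next
    fix n y assume y: "y \<in> shell n"
    show "inner_orbital 0 m u y \<le> ennreal (if n = 0 then 1 else N)"
    proof (cases "n = 0")
      case True
      then show ?thesis
        using inner_orbital_le_1[OF _ _ u] y by (simp add: shell_def)
    next
      case False
      then show ?thesis
        using inner_orbital_le_card_roots[OF _ _ u m D] y
        by (simp add: shell_def N_def ennreal_of_nat_eq_real_of_nat)
    qed
  qed (simp add: N_def)
  also have "\<dots> = ennreal (1 - 1 / q + N * (1 / q))"
    using geometric_sums_first_term[of "1 / q" N] resq_ge_2
    by (intro suminf_ennreal_eq) (simp_all add: N_def)
  also have "1 - 1 / q + N * (1 / q) = (q - 1 + N) / q"
    using q_pos by (simp add: field_simps)
  finally show ?thesis
    unfolding N_def .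
qed

end

theorem lemma3p6:
  fixes v :: "'a::field \<Rightarrow> int" and M :: "'a measure" and e :: nat and m u :: 'a
  assumes "nonarch_local_field v"
    and "haar_measure v M"
    and "m \<in> vint v"
    and "u \<noteq> 0" and "v u = 0"
  shows "(\<integral>\<^sup>+ y. (if y = 0 then 0 else
            ennreal (1 / (absv v y)\<^sup>2) *
            (\<integral>\<^sup>+ x. indicator (ZK v e)
                 (m2mul (m2inv (gxy x y)) (m2mul (gam m u) (gxy x y))) \<partial>M)) \<partial>M)
         \<le> (let q = real (resq v);
                 D = m\<^sup>2 - 4 * u;
                 N = card (residue v ` {t \<in> vint v. t\<^sup>2 - m * t + u \<in> vmax v})
             in if D = 0 then top
                else if e = 0 \<and> v D = 0 then ennreal ((q - 1 + real N) / q)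
                else ennreal (4 * q powr (real_of_int (v D) / 2 - real e)))"
proof -
  interpret local_field_haar v M
    using assms(1,2) by unfold_locales (auto simp: nonarch_local_field_def)
  have lhs: "(\<integral>\<^sup>+ y. (if y = 0 then 0 else ennreal (1 / (absv v y)\<^sup>2) *
      (\<integral>\<^sup>+ x. indicator (ZK v e) (m2mul (m2inv (gxy x y)) (m2mul (gam m u) (gxy x y))) \<partial>M)) \<partial>M)
      = orbital_integral e m u"
    unfolding orbital_integral_def inner_orbital_def ..
  show ?thesis
  proof (cases "m\<^sup>2 - 4 * u = 0")
    case False
    show ?thesis
    proof (cases "e = 0 \<and> v (m\<^sup>2 - 4 * u) = 0")
      case True
      then show ?thesis
        unfolding lhs using orbital_integral_le_unramified[OF assms(4,5,3) False] False
        by (simp add: Let_def)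
    next
      case other: False
      have "orbital_integral e m u \<le> ennreal (2 * q powr (real_of_int (v (m\<^sup>2 - 4 * u)) / 2 - real e))"
        using orbital_integral_le[OF assms(4,5) False] .
      also have "\<dots> \<le> ennreal (4 * q powr (real_of_int (v (m\<^sup>2 - 4 * u)) / 2 - real e))"
        by (intro ennreal_leI) simp
      finally show ?thesis
        unfolding lhs Let_def if_not_P[OF False] if_not_P[OF other] .
    qed
  qed (simp add: Let_def)
qed

end
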